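(* If $\eta_n,\eta\in\mathcal{L}$ and $\eta_n\to\eta$ weakly, then $c_\pi(\eta_n)\to c_\pi(\eta)$.
   Context: $\pi\in(0,1)$, $\epsilon>0$, $B>0$. $\mathcal{L}=\{\eta\in\mathcal{P}(\mathbb{R}):\mathbb{E}_\eta|X|^{1+\epsilon}\le B\}$. $F_\eta(x)=\eta((-\infty,x])$, $x_\pi(\eta)=\min\{z:F_\eta(z)\ge\pi\}$, $c_\pi(\eta)=\frac{F_\eta(x_\pi(\eta))-\pi}{1-\pi}x_\pi(\eta)+\frac{1}{1-\pi}\int_{(x_\pi(\eta),\infty)}y\,dF_\eta(y)$. *)

theory Defs
  imports "HOL-Probability.Probability"
begin

text \<open>The class L: Borel probability measures on the real line with
  E|X|^(1+eps) <= B (moment as a nonnegative integral, so it may be infinite).\<close>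
definition momL :: "real \<Rightarrow> real \<Rightarrow> real measure set" where
  "momL eps B = {\<eta>. prob_space \<eta> \<and> sets \<eta> = sets borel \<and>
      (\<integral>\<^sup>+ x. ennreal (\<bar>x\<bar> powr (1 + eps)) \<partial>\<eta>) \<le> ennreal B}"

definition xpi :: "real \<Rightarrow> real measure \<Rightarrow> real" where
  "xpi p \<eta> = (LEAST z. cdf \<eta> z \<ge> p)"

definition cpi :: "real \<Rightarrow> real measure \<Rightarrow> real" where
  "cpi p \<eta> = (cdf \<eta> (xpi p \<eta>) - p) / (1 - p) * xpi p \<eta>
      + 1 / (1 - p) * (LINT y:{xpi p \<eta><..}|\<eta>. y)"

end

theory Submission
  imports Defs
begin

(* By the Rockafellar--Uryasev representation, c_pi(eta) is the minimum over t of
   t + E_eta (X - t)^+ / (1 - pi), attained at t = x_pi(eta), and these objective functions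
   are Lipschitz with the common constant 1 + 1/(1 - pi).  The uniform (1+eps)-moment bound
   makes truncation errors of functions of linear growth uniformly O(R^-eps), so weak
   convergence gives pointwise convergence of the objectives; by Markov's inequality it also
   confines all quantiles x_pi(eta_n) to one compact interval.  Minima of equi-Lipschitz
   functions converging pointwise, with minimisers in a fixed compact set, converge to the
   minimum of the limit. *)

lemma tendsto_of_uniform_approximation:
  fixes A :: "nat \<Rightarrow> real" and a :: "'i \<Rightarrow> nat \<Rightarrow> real"
  assumes "F \<noteq> bot"
    and approx_conv: "\<And>i. a i \<longlonglongrightarrow> a' i"
    and err: "(e \<longlongrightarrow> 0) F"
    and approx: "\<forall>\<^sub>F i in F. (\<forall>n. \<bar>A n - a i n\<bar> \<le> e i) \<and> \<bar>A' - a' i\<bar> \<le> e i"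
  shows "A \<longlonglongrightarrow> A'"
proof (rule LIMSEQ_I)
  fix r :: real assume "0 < r"
  then have "\<forall>\<^sub>F i in F. e i < r / 3"
    using err by (intro order_tendstoD) auto
  then obtain i where small: "e i < r / 3"
    and A: "\<And>n. \<bar>A n - a i n\<bar> \<le> e i" and A': "\<bar>A' - a' i\<bar> \<le> e i"
    using eventually_happens'[OF \<open>F \<noteq> bot\<close> eventually_conj[OF _ approx]] by blast
  obtain N where N: "\<And>n. n \<ge> N \<Longrightarrow> \<bar>a i n - a' i\<bar> < r / 3"
    using LIMSEQ_D[OF approx_conv, of "r / 3"] \<open>0 < r\<close> by auto
  have "norm (A n - A') < r" if "n \<ge> N" for n
    using A[of n] A' N[OF that] small unfolding abs_le_iff abs_less_iff real_norm_def by linarith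
  then show "\<exists>N. \<forall>n\<ge>N. norm (A n - A') < r" by blast
qed

lemma tendsto_min_equi_lipschitz:
  fixes g :: "nat \<Rightarrow> 'a::metric_space \<Rightarrow> real" and h :: "'a \<Rightarrow> real"
  assumes "compact K" and lip: "\<And>n. L-lipschitz_on K (g n)"
    and conv: "\<And>t. (\<lambda>n. g n t) \<longlonglongrightarrow> h t"
    and min_g: "\<And>n t. g n (x n) \<le> g n t" and min_h: "\<And>t. h x\<^sub>0 \<le> h t"
    and x_in: "\<And>n. x n \<in> K"
  shows "(\<lambda>n. g n (x n)) \<longlonglongrightarrow> h x\<^sub>0"
proof (rule tendstoI)
  fix r :: real assume "0 < r"
  have "0 \<le> L" using lipschitz_on_nonneg[OF lip] .
  define \<delta> where "\<delta> = r / (2 * (L + 1))"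
  have "0 < \<delta>" using \<open>0 < r\<close> \<open>0 \<le> L\<close> by (simp add: \<delta>_def)
  have "L * \<delta> \<le> r / 2"
    using \<open>0 < r\<close> \<open>0 \<le> L\<close> by (simp add: \<delta>_def field_simps)
  obtain G where "G \<subseteq> K" "finite G" and net: "K \<subseteq> (\<Union>s\<in>G. ball s \<delta>)"
    using compactE_image[OF \<open>compact K\<close>, of K "\<lambda>s. ball s \<delta>"] \<open>0 < \<delta>\<close> by force
  have upper: "\<forall>\<^sub>F n in sequentially. g n (x n) < h x\<^sub>0 + r"
    using order_tendstoD(2)[OF conv[of x\<^sub>0], of "h x\<^sub>0 + r"] \<open>0 < r\<close>
    by (auto elim: eventually_mono intro: le_less_trans[OF min_g])
  have "\<forall>\<^sub>F n in sequentially. \<forall>s\<in>G. h s - r / 2 < g n s"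
    using \<open>finite G\<close> \<open>0 < r\<close> by (intro eventually_ball_finite ballI order_tendstoD(1)[OF conv]) auto
  then have lower: "\<forall>\<^sub>F n in sequentially. h x\<^sub>0 - r < g n (x n)"
  proof (rule eventually_mono)
    fix n assume close: "\<forall>s\<in>G. h s - r / 2 < g n s"
    obtain s where "s \<in> G" and "dist s (x n) < \<delta>"
      using net x_in[of n] by auto
    have "dist (g n s) (g n (x n)) \<le> L * dist s (x n)"
      using \<open>s \<in> G\<close> \<open>G \<subseteq> K\<close> x_in by (intro lipschitz_onD[OF lip]) auto
    also have "\<dots> \<le> L * \<delta>"
      using \<open>dist s (x n) < \<delta>\<close> \<open>0 \<le> L\<close> by (intro mult_left_mono) auto
    finally have "g n s - g n (x n) \<le> L * \<delta>"
      by (simp add: dist_real_def)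
    then show "h x\<^sub>0 - r < g n (x n)"
      using close \<open>s \<in> G\<close> min_h[of s] \<open>L * \<delta> \<le> r / 2\<close> by fastforce
  qed
  show "\<forall>\<^sub>F n in sequentially. dist (g n (x n)) (h x\<^sub>0) < r"
    using upper lower by eventually_elim (simp add: dist_real_def abs_less_iff)
qed

lemma tendsto_div_powr_at_top: "0 < a \<Longrightarrow> ((\<lambda>R. c / R powr a) \<longlongrightarrow> (0::real)) at_top"
  using tendsto_mult_right_zero[OF tendsto_neg_powr[of "-a", OF _ filterlim_ident], of c]
  by (simp add: powr_minus_divide)

lemma abs_le_one_plus_powr:
  fixes y :: real assumes "1 \<le> a" shows "\<bar>y\<bar> \<le> 1 + \<bar>y\<bar> powr a"
proof (cases "\<bar>y\<bar> \<le> 1")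
  case False
  then have "\<bar>y\<bar> powr 1 \<le> \<bar>y\<bar> powr a" using assms by (intro powr_mono) auto
  then show ?thesis by simp
qed (use powr_ge_zero[of "\<bar>y\<bar>" a] in linarith)

lemma momL_real_distribution: "\<mu> \<in> momL eps B \<Longrightarrow> real_distribution \<mu>"
  unfolding momL_def real_distribution_def real_distribution_axioms_def by auto

lemma measurable_momL: "\<mu> \<in> momL eps B \<Longrightarrow> f \<in> borel_measurable borel \<Longrightarrow> f \<in> borel_measurable \<mu>"
  unfolding momL_def using measurable_cong_sets by blast

lemma momL_integrable_moment:
  assumes "\<mu> \<in> momL eps B"
  shows "integrable \<mu> (\<lambda>y. \<bar>y\<bar> powr (1 + eps))"
proof (rule integrableI_nonneg)
  show "(\<lambda>y. \<bar>y\<bar> powr (1 + eps)) \<in> borel_measurable \<mu>"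
    by (rule measurable_momL[OF assms]) measurable
  have "(\<integral>\<^sup>+ y. ennreal (\<bar>y\<bar> powr (1 + eps)) \<partial>\<mu>) \<le> ennreal B"
    using assms unfolding momL_def by blast
  then show "(\<integral>\<^sup>+ y. ennreal (\<bar>y\<bar> powr (1 + eps)) \<partial>\<mu>) < \<infinity>"
    using ennreal_less_top[of B] by (simp add: le_less_trans)
qed simp

lemma momL_moment_le:
  assumes "\<mu> \<in> momL eps B" "0 \<le> B"
  shows "(\<integral>y. \<bar>y\<bar> powr (1 + eps) \<partial>\<mu>) \<le> B"
proof -
  have "(\<integral>\<^sup>+ y. ennreal (\<bar>y\<bar> powr (1 + eps)) \<partial>\<mu>) \<le> ennreal B"
    using assms(1) unfolding momL_def by blast
  then have "ennreal (\<integral>y. \<bar>y\<bar> powr (1 + eps) \<partial>\<mu>) \<le> ennreal B"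
    by (subst (asm) nn_integral_eq_integral[OF momL_integrable_moment[OF assms(1)]]) simp_all
  then show ?thesis
    using assms(2) by simp
qed

lemma momL_integrable_linear_growth:
  assumes "\<mu> \<in> momL eps B" "0 \<le> eps" "f \<in> borel_measurable borel"
    and growth: "\<And>y. \<bar>f y\<bar> \<le> C * (1 + \<bar>y\<bar>)"
  shows "integrable \<mu> f"
proof (rule Bochner_Integration.integrable_bound)
  interpret real_distribution \<mu> using momL_real_distribution[OF assms(1)] .
  show "integrable \<mu> (\<lambda>y. C * (2 + \<bar>y\<bar> powr (1 + eps)))"
    by (intro integrable_mult_right Bochner_Integration.integrable_add integrable_const
        momL_integrable_moment[OF assms(1)])
  show "f \<in> borel_measurable \<mu>" using measurable_momL[OF assms(1,3)] .
  have "0 \<le> C" using growth[of 0] by simp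
  show "AE y in \<mu>. norm (f y) \<le> norm (C * (2 + \<bar>y\<bar> powr (1 + eps)))"
  proof (rule AE_I2)
    fix y
    have "1 + \<bar>y\<bar> \<le> 2 + \<bar>y\<bar> powr (1 + eps)"
      using abs_le_one_plus_powr[of "1 + eps" y] \<open>0 \<le> eps\<close> by simp
    then have "\<bar>f y\<bar> \<le> C * (2 + \<bar>y\<bar> powr (1 + eps))"
      using growth[of y] \<open>0 \<le> C\<close> by (meson mult_left_mono order_trans)
    then show "norm (f y) \<le> norm (C * (2 + \<bar>y\<bar> powr (1 + eps)))" by simp
  qed
qed

lemma momL_tail_le:
  assumes "\<mu> \<in> momL eps B" "0 \<le> B" "0 \<le> eps" "0 < R"
  shows "measure \<mu> {y. R \<le> \<bar>y\<bar>} \<le> B / R powr (1 + eps)"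
proof -
  interpret real_distribution \<mu> using momL_real_distribution[OF assms(1)] .
  have "measure \<mu> {y. R \<le> \<bar>y\<bar>}
      \<le> measure \<mu> {y \<in> space \<mu>. R powr (1 + eps) \<le> \<bar>y\<bar> powr (1 + eps)}"
    using assms(3,4) by (intro finite_measure_mono) (auto intro: powr_mono2)
  also have "\<dots> \<le> (\<integral>y. \<bar>y\<bar> powr (1 + eps) \<partial>\<mu>) / R powr (1 + eps)"
    using momL_integrable_moment[OF assms(1)] assms(4) by (intro integral_Markov_inequality_measure) auto
  also have "\<dots> \<le> B / R powr (1 + eps)"
    using momL_moment_le[OF assms(1,2)] by (simp add: divide_right_mono)
  finally show ?thesis .
qed

lemma clamp_linear_growth_error:
  fixes f :: "real \<Rightarrow> real"
  assumes growth: "\<And>y. \<bar>f y\<bar> \<le> C * (1 + \<bar>y\<bar>)" and "1 \<le> R" "0 \<le> eps"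
  shows "\<bar>f y - max (- (C * (1 + R))) (min (C * (1 + R)) (f y))\<bar>
    \<le> 2 * C * \<bar>y\<bar> powr (1 + eps) / R powr eps"
proof -
  have "0 \<le> C" using growth[of 0] by simp
  show ?thesis
  proof (cases "\<bar>y\<bar> \<le> R")
    case True
    have "\<bar>f y\<bar> \<le> C * (1 + R)"
      using growth[of y] True \<open>0 \<le> C\<close> by (meson add_left_mono mult_left_mono order_trans)
    then show ?thesis using \<open>0 \<le> C\<close> by (simp add: abs_le_iff)
  next
    case False
    have "\<bar>y\<bar> = \<bar>y\<bar> powr (1 + eps) / \<bar>y\<bar> powr eps"
      using False \<open>1 \<le> R\<close> by (simp add: powr_add)
    also have "\<dots> \<le> \<bar>y\<bar> powr (1 + eps) / R powr eps"
      using False \<open>1 \<le> R\<close> \<open>0 \<le> eps\<close> by (intro divide_left_mono powr_mono2) auto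
    finally have y_le: "\<bar>y\<bar> \<le> \<bar>y\<bar> powr (1 + eps) / R powr eps" .
    have "0 \<le> C * (1 + R)" using \<open>0 \<le> C\<close> \<open>1 \<le> R\<close> by simp
    then have "\<bar>f y - max (- (C * (1 + R))) (min (C * (1 + R)) (f y))\<bar> \<le> \<bar>f y\<bar>"
      by (simp add: abs_le_iff max_def min_def)
    also have "\<dots> \<le> C * (1 + \<bar>y\<bar>)"
      by (rule growth)
    also have "\<dots> \<le> C * (2 * \<bar>y\<bar>)"
      using False \<open>1 \<le> R\<close> \<open>0 \<le> C\<close> by (intro mult_left_mono) auto
    also have "\<dots> \<le> 2 * C * \<bar>y\<bar> powr (1 + eps) / R powr eps"
      using mult_left_mono[OF y_le, of "2 * C"] \<open>0 \<le> C\<close> by simp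
    finally show ?thesis .
  qed
qed

lemma momL_clamp_error:
  assumes \<mu>: "\<mu> \<in> momL eps B" and "0 \<le> B" "0 \<le> eps" "1 \<le> R"
    and f: "f \<in> borel_measurable borel" and growth: "\<And>y. \<bar>f y\<bar> \<le> C * (1 + \<bar>y\<bar>)"
  shows "\<bar>(\<integral>y. f y \<partial>\<mu>) - (\<integral>y. max (- (C * (1 + R))) (min (C * (1 + R)) (f y)) \<partial>\<mu>)\<bar>
    \<le> 2 * C * B / R powr eps"
proof -
  let ?h = "\<lambda>y. max (- (C * (1 + R))) (min (C * (1 + R)) (f y))"
  have "0 \<le> C" using growth[of 0] by simp
  have int_f: "integrable \<mu> f"
    using momL_integrable_linear_growth[OF \<mu> \<open>0 \<le> eps\<close> f growth] .
  have "integrable \<mu> ?h"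
  proof (rule momL_integrable_linear_growth[OF \<mu> \<open>0 \<le> eps\<close>])
    show "?h \<in> borel_measurable borel" using f by measurable
    have "0 \<le> C * (1 + R)" using \<open>0 \<le> C\<close> \<open>1 \<le> R\<close> by simp
    then show "\<bar>?h y\<bar> \<le> C * (1 + \<bar>y\<bar>)" for y
      using growth[of y] by (simp add: abs_le_iff max_def min_def)
  qed
  then have "(\<integral>y. f y \<partial>\<mu>) - (\<integral>y. ?h y \<partial>\<mu>) = (\<integral>y. f y - ?h y \<partial>\<mu>)"
    using int_f by simp
  also have "\<bar>\<dots>\<bar> \<le> (\<integral>y. 2 * C * \<bar>y\<bar> powr (1 + eps) / R powr eps \<partial>\<mu>)"
    using int_f \<open>integrable \<mu> ?h\<close> momL_integrable_moment[OF \<mu>]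
    by (intro integral_abs_bound_integral clamp_linear_growth_error[OF growth \<open>1 \<le> R\<close> \<open>0 \<le> eps\<close>])
      auto
  also have "\<dots> = 2 * C * (\<integral>y. \<bar>y\<bar> powr (1 + eps) \<partial>\<mu>) / R powr eps"
    by simp
  also have "\<dots> \<le> 2 * C * B / R powr eps"
    using momL_moment_le[OF \<mu> \<open>0 \<le> B\<close>] \<open>0 \<le> C\<close> by (intro divide_right_mono mult_left_mono) auto
  finally show ?thesis .
qed

theorem momL_weak_conv_integral_linear_growth:
  assumes \<mu>s: "\<And>n. \<mu>s n \<in> momL eps B" and \<mu>: "\<mu> \<in> momL eps B" and "weak_conv_m \<mu>s \<mu>"
    and "0 < eps" "0 \<le> B"
    and cont: "\<And>y. isCont f y" and growth: "\<And>y. \<bar>f y\<bar> \<le> C * (1 + \<bar>y\<bar>)"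
  shows "(\<lambda>n. \<integral>y. f y \<partial>\<mu>s n) \<longlonglongrightarrow> (\<integral>y. f y \<partial>\<mu>)"
proof -
  define h where "h R y = max (- (C * (1 + R))) (min (C * (1 + R)) (f y))" for R y
  have "(\<lambda>n. \<integral>y. h R y \<partial>\<mu>s n) \<longlonglongrightarrow> (\<integral>y. h R y \<partial>\<mu>)" for R
  proof (rule weak_conv_imp_integral_bdd_continuous_conv)
    show "real_distribution (\<mu>s n)" for n using momL_real_distribution[OF \<mu>s] .
    show "real_distribution \<mu>" using momL_real_distribution[OF \<mu>] .
    show "weak_conv_m \<mu>s \<mu>" by fact
    show "isCont (h R) y" for y unfolding h_def by (intro continuous_intros cont)
    show "norm (h R y) \<le> \<bar>C * (1 + R)\<bar>" for y unfolding h_def by auto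
  qed
  moreover have "((\<lambda>R. 2 * C * B / R powr eps) \<longlongrightarrow> 0) at_top"
    using tendsto_div_powr_at_top[OF \<open>0 < eps\<close>] .
  moreover have "\<forall>\<^sub>F R in at_top. (\<forall>n. \<bar>(\<integral>y. f y \<partial>\<mu>s n) - (\<integral>y. h R y \<partial>\<mu>s n)\<bar> \<le> 2 * C * B / R powr eps)
      \<and> \<bar>(\<integral>y. f y \<partial>\<mu>) - (\<integral>y. h R y \<partial>\<mu>)\<bar> \<le> 2 * C * B / R powr eps"
  proof -
    have "f \<in> borel_measurable borel"
      using cont by (intro borel_measurable_continuous_onI continuous_at_imp_continuous_on) auto
    note err = momL_clamp_error[OF _ \<open>0 \<le> B\<close> less_imp_le[OF \<open>0 < eps\<close>] _ this growth]
    show ?thesis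
      using eventually_ge_at_top[of "1::real"] by eventually_elim (simp add: h_def err \<mu>s \<mu>)
  qed
  ultimately show ?thesis
    by (rule tendsto_of_uniform_approximation[OF trivial_limit_at_top_linorder])
qed

definition stop_loss :: "real measure \<Rightarrow> real \<Rightarrow> real" where
  "stop_loss M t = (\<integral>y. max 0 (y - t) \<partial>M)"

definition ru_objective :: "real \<Rightarrow> real measure \<Rightarrow> real \<Rightarrow> real" where
  "ru_objective p M t = t + stop_loss M t / (1 - p)"

context real_distribution
begin

lemma xpi_le_iff:
  assumes "0 < p" "p < 1"
  shows "xpi p M \<le> z \<longleftrightarrow> p \<le> cdf M z"
proof -
  interpret cdf_distribution M ..
  have inv: "p \<le> cdf M x \<longleftrightarrow> Inf {x. p \<le> cdf M x} \<le> x" for x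
    using pseudoinverse[OF assms] .
  have "xpi p M = Inf {x. p \<le> cdf M x}"
    unfolding xpi_def by (rule Least_equality) (use inv in blast)+
  then show ?thesis using inv[of z] by simp
qed

lemma prob_Compl: "A \<in> sets borel \<Longrightarrow> measure M (- A) = 1 - measure M A"
  by (metis Compl_eq_Diff_UNIV prob_compl sets_M space_eq_univ)

lemma measure_greaterThan: "measure M {t<..} = 1 - cdf M t"
  using prob_Compl[of "{..t}"] by (simp add: cdf_def)

lemma abs_xpi_le:
  assumes "0 < p" "p < 1" and tail: "measure M {y. R \<le> \<bar>y\<bar>} < min p (1 - p)"
  shows "\<bar>xpi p M\<bar> \<le> R"
proof -
  have "measure M {R<..} \<le> measure M {y. R \<le> \<bar>y\<bar>}"
    by (intro finite_measure_mono) auto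
  then have "xpi p M \<le> R"
    using tail xpi_le_iff[OF assms(1,2)] by (simp add: measure_greaterThan)
  have "cdf M (- R) \<le> measure M {y. R \<le> \<bar>y\<bar>}"
    unfolding cdf_def by (intro finite_measure_mono) auto
  then have "\<not> xpi p M \<le> - R"
    using tail xpi_le_iff[OF assms(1,2)] by simp
  with \<open>xpi p M \<le> R\<close> show ?thesis by linarith
qed

context
  assumes integrable_id: "integrable M (\<lambda>y. y)"
begin

lemma integrable_stop_loss: "integrable M (\<lambda>y. max 0 (y - t))"
proof (rule Bochner_Integration.integrable_bound)
  show "integrable M (\<lambda>y. \<bar>y\<bar> + \<bar>t\<bar>)" using integrable_id by simp
qed auto

lemma stop_loss_diff_ge:
  assumes "A \<in> sets borel" and "\<And>y. c * indicator A y \<le> max 0 (y - t) - max 0 (y - s)"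
  shows "c * measure M A \<le> stop_loss M t - stop_loss M s"
proof -
  have "c * measure M A = (\<integral>y. c * indicator A y \<partial>M)"
    using assms(1) by simp
  also have "\<dots> \<le> (\<integral>y. max 0 (y - t) - max 0 (y - s) \<partial>M)"
    using assms(1) integrable_stop_loss
    by (intro integral_mono assms(2) integrable_mult_right integrable_real_indicator)
      (auto simp: emeasure_eq_measure)
  also have "\<dots> = stop_loss M t - stop_loss M s"
    unfolding stop_loss_def using integrable_stop_loss by simp
  finally show ?thesis .
qed

lemma lipschitz_stop_loss: "1-lipschitz_on UNIV (stop_loss M)"
proof (rule lipschitz_onI)
  fix t s :: real
  have "\<bar>stop_loss M t - stop_loss M s\<bar> = \<bar>\<integral>y. max 0 (y - t) - max 0 (y - s) \<partial>M\<bar>"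
    unfolding stop_loss_def using integrable_stop_loss by simp
  also have "\<dots> \<le> (\<integral>y. \<bar>t - s\<bar> \<partial>M)"
    using integrable_stop_loss by (intro integral_abs_bound_integral) auto
  finally show "dist (stop_loss M t) (stop_loss M s) \<le> 1 * dist t s"
    using prob_space by (simp add: dist_real_def)
qed simp

lemma lipschitz_ru_objective:
  assumes "p < 1" shows "(1 + 1 / (1 - p))-lipschitz_on UNIV (ru_objective p M)"
  using lipschitz_on_add[OF lipschitz_on_id
      lipschitz_on_cmult_real_nonneg[OF lipschitz_stop_loss, of "1 / (1 - p)"]] assms
  unfolding ru_objective_def by simp

lemma cpi_eq_ru_objective:
  assumes "p < 1" shows "cpi p M = ru_objective p M (xpi p M)"
proof -
  define x where "x = xpi p M"
  have "(\<lambda>y. indicator {x<..} y *\<^sub>R y) = (\<lambda>y. max 0 (y - x) + x * indicator {x<..} y)"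
    by (auto simp: indicator_def)
  then have "(LINT y:{x<..}|M. y) = (\<integral>y. max 0 (y - x) + x * indicator {x<..} y \<partial>M)"
    unfolding set_lebesgue_integral_def by simp
  also have "\<dots> = stop_loss M x + x * measure M {x<..}"
    unfolding stop_loss_def using integrable_stop_loss
    by (subst Bochner_Integration.integral_add) (auto simp: emeasure_eq_measure)
  finally have "(LINT y:{x<..}|M. y) = stop_loss M x + x * (1 - cdf M x)"
    by (simp add: measure_greaterThan)
  then have "cpi p M = ((cdf M x - p) * x + (stop_loss M x + x * (1 - cdf M x))) / (1 - p)"
    unfolding cpi_def x_def[symmetric] by (simp add: add_divide_distrib)
  also have "\<dots> = (x * (1 - p) + stop_loss M x) / (1 - p)"
    by (simp add: algebra_simps)
  also have "\<dots> = ru_objective p M x"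
    using assms unfolding ru_objective_def by (simp add: add_divide_distrib)
  finally show ?thesis unfolding x_def .
qed

lemma stop_loss_diff_xpi:
  assumes "0 < p" "p < 1"
  shows "(xpi p M - t) * (1 - p) \<le> stop_loss M t - stop_loss M (xpi p M)"
proof (cases "xpi p M \<le> t")
  case True
  have "(xpi p M - t) * measure M {xpi p M<..} \<le> stop_loss M t - stop_loss M (xpi p M)"
    using True by (intro stop_loss_diff_ge) (auto simp: indicator_def)
  moreover have "measure M {xpi p M<..} \<le> 1 - p"
    using xpi_le_iff[OF assms, of "xpi p M"] by (simp add: measure_greaterThan)
  moreover have "(xpi p M - t) * (1 - p) \<le> (xpi p M - t) * measure M {xpi p M<..}"
    using True \<open>measure M {xpi p M<..} \<le> 1 - p\<close> by (intro mult_left_mono_neg) auto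
  ultimately show ?thesis by linarith
next
  case False
  have "measure M {..<xpi p M} \<le> p"
  proof (rule tendsto_upperbound[OF cdf_at_left])
    show "\<forall>\<^sub>F z in at_left (xpi p M). cdf M z \<le> p"
      using eventually_at_left_real[of "xpi p M - 1" "xpi p M"]
    proof (rule eventually_mono)
      fix z assume "z \<in> {xpi p M - 1<..<xpi p M}"
      then show "cdf M z \<le> p" using xpi_le_iff[OF assms, of z] by simp
    qed simp
  qed simp
  then have "1 - p \<le> measure M {xpi p M..}"
    using prob_Compl[of "{..<xpi p M}"] by simp
  moreover have "(xpi p M - t) * measure M {xpi p M..} \<le> stop_loss M t - stop_loss M (xpi p M)"
    using False by (intro stop_loss_diff_ge) (auto simp: indicator_def)
  moreover have "(xpi p M - t) * (1 - p) \<le> (xpi p M - t) * measure M {xpi p M..}"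
    using False \<open>1 - p \<le> measure M {xpi p M..}\<close> by (intro mult_left_mono) auto
  ultimately show ?thesis by linarith
qed

lemma ru_objective_xpi_le:
  assumes "0 < p" "p < 1" shows "ru_objective p M (xpi p M) \<le> ru_objective p M t"
proof -
  have "xpi p M - t \<le> (stop_loss M t - stop_loss M (xpi p M)) / (1 - p)"
    using stop_loss_diff_xpi[OF assms, of t] assms by (simp add: pos_le_divide_eq)
  then show ?thesis
    unfolding ru_objective_def by (simp add: diff_divide_distrib)
qed

end

end

lemma momL_xpi_bounded:
  assumes "0 < p" "p < 1" "0 \<le> eps" "0 \<le> B"
  obtains R where "\<And>\<mu>. \<mu> \<in> momL eps B \<Longrightarrow> \<bar>xpi p \<mu>\<bar> \<le> R"
proof -
  have "\<forall>\<^sub>F R in at_top. 0 < R \<and> B / R powr (1 + eps) < min p (1 - p)"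
    using assms by (intro eventually_conj eventually_gt_at_top order_tendstoD(2)[OF tendsto_div_powr_at_top]) auto
  then obtain R where "0 < R" and small: "B / R powr (1 + eps) < min p (1 - p)"
    using eventually_happens'[of "at_top :: real filter"] by auto
  have bound: "\<bar>xpi p \<mu>\<bar> \<le> R" if "\<mu> \<in> momL eps B" for \<mu>
  proof (rule real_distribution.abs_xpi_le[OF momL_real_distribution[OF that] assms(1,2)])
    show "measure \<mu> {y. R \<le> \<bar>y\<bar>} < min p (1 - p)"
      using momL_tail_le[OF that assms(4,3) \<open>0 < R\<close>] small by linarith
  qed
  show ?thesis by (rule that[OF bound])
qed

lemma momL_integrable_id: "\<mu> \<in> momL eps B \<Longrightarrow> 0 \<le> eps \<Longrightarrow> integrable \<mu> (\<lambda>y. y)"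
  by (rule momL_integrable_linear_growth[where C=1]) auto

lemma momL_weak_conv_stop_loss:
  assumes "\<And>n. \<mu>s n \<in> momL eps B" "\<mu> \<in> momL eps B" "weak_conv_m \<mu>s \<mu>" "0 < eps" "0 \<le> B"
  shows "(\<lambda>n. stop_loss (\<mu>s n) t) \<longlonglongrightarrow> stop_loss \<mu> t"
  unfolding stop_loss_def
proof (rule momL_weak_conv_integral_linear_growth[OF assms])
  show "isCont (\<lambda>y. max 0 (y - t)) y" for y by (intro continuous_intros)
  have "\<bar>max 0 (y - t)\<bar> \<le> \<bar>y\<bar> + \<bar>t\<bar>" for y
    by auto
  also have "\<bar>y\<bar> + \<bar>t\<bar> \<le> (1 + \<bar>t\<bar>) * (1 + \<bar>y\<bar>)" for y
    by (simp add: algebra_simps)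
  finally show "\<bar>max 0 (y - t)\<bar> \<le> (1 + \<bar>t\<bar>) * (1 + \<bar>y\<bar>)" for y .
qed

theorem lemma6:
  fixes p eps B :: real and \<eta>s :: "nat \<Rightarrow> real measure" and \<eta> :: "real measure"
  assumes "0 < p" "p < 1" "0 < eps" "0 < B"
    and "\<And>n. \<eta>s n \<in> momL eps B" "\<eta> \<in> momL eps B"
    and "weak_conv_m \<eta>s \<eta>"
  shows "(\<lambda>n. cpi p (\<eta>s n)) \<longlonglongrightarrow> cpi p \<eta>"
proof -
  note \<eta>s = assms(5) and \<eta> = assms(6)
  have "0 \<le> eps" "0 \<le> B" using assms(3,4) by simp_all
  note rd = momL_real_distribution and int = momL_integrable_id[OF _ \<open>0 \<le> eps\<close>]
  have conv: "(\<lambda>n. ru_objective p (\<eta>s n) t) \<longlonglongrightarrow> ru_objective p \<eta> t" for t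
    unfolding ru_objective_def
    by (intro tendsto_intros momL_weak_conv_stop_loss[OF \<eta>s \<eta> assms(7,3) \<open>0 \<le> B\<close>])
      (use assms(2) in simp)
  obtain R where R: "\<And>\<mu>. \<mu> \<in> momL eps B \<Longrightarrow> \<bar>xpi p \<mu>\<bar> \<le> R"
    using momL_xpi_bounded[OF assms(1,2) \<open>0 \<le> eps\<close> \<open>0 \<le> B\<close>] by blast
  have bounded: "xpi p (\<eta>s n) \<in> {-R..R}" for n
    using R[OF \<eta>s[of n]] by (simp add: abs_le_iff)
  have "(\<lambda>n. ru_objective p (\<eta>s n) (xpi p (\<eta>s n))) \<longlonglongrightarrow> ru_objective p \<eta> (xpi p \<eta>)"
  proof (rule tendsto_min_equi_lipschitz[OF compact_Icc _ conv _ _ bounded])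
    show "(1 + 1 / (1 - p))-lipschitz_on {-R..R} (ru_objective p (\<eta>s n))" for n
      using real_distribution.lipschitz_ru_objective[OF rd[OF \<eta>s] int[OF \<eta>s] assms(2)]
      by (rule lipschitz_on_subset) simp
    show "ru_objective p (\<eta>s n) (xpi p (\<eta>s n)) \<le> ru_objective p (\<eta>s n) t" for n t
      using real_distribution.ru_objective_xpi_le[OF rd[OF \<eta>s] int[OF \<eta>s] assms(1,2)] .
    show "ru_objective p \<eta> (xpi p \<eta>) \<le> ru_objective p \<eta> t" for t
      using real_distribution.ru_objective_xpi_le[OF rd[OF \<eta>] int[OF \<eta>] assms(1,2)] .
  qed
  moreover have "cpi p \<mu> = ru_objective p \<mu> (xpi p \<mu>)" if "\<mu> \<in> momL eps B" for \<mu>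
    using real_distribution.cpi_eq_ru_objective[OF rd[OF that] int[OF that] assms(2)] .
  ultimately show ?thesis
    using \<eta>s \<eta> by simp
qed

end
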